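(* Let $\rho:\mathcal{F}\to[\Psi]^\omega$ be a partition regular function. Then $\rho$ is $P^+$ if and only if it is both $P^{\,|}$ and $P^-$.
   Context: Let $\Omega,\Psi$ be countably infinite sets and $\mathcal{F}\subseteq[\Omega]^\omega$ a nonempty family of infinite subsets of $\Omega$ with $A\setminus K\in\mathcal{F}$ for all $A\in\mathcal{F}$ and finite $K\subseteq\Omega$. A function $\rho:\mathcal{F}\to[\Psi]^\omega$ is partition regular if: (M) $E\subseteq F$ in $\mathcal{F}$ implies $\rho(E)\subseteq\rho(F)$; (R) for every $F\in\mathcal{F}$ and $A,B\subseteq\Psi$ with $\rho(F)=A\cup B$ there is $E\in\mathcal{F}$ with $\rho(E)\subseteq A$ or $\rho(E)\subseteq B$; (S) for every $F\in\mathcal{F}$ there is $E\subseteq F$, $E\in\mathcal{F}$, such that for every $a\in\rho(E)$ there is a finite $K\subseteq\Omega$ with $a\notin\rho(E\setminus K)$. $\mathcal{I}_\rho=\{S\subseteq\Psi:\forall F\in\mathcal{F}\ \rho(F)\not\subseteq S\}$ and $\mathcal{I}_\rho^+=\mathcal{P}(\Psi)\setminus\mathcal{I}_\rho$. For $F\in\mathcal{F}$ and $B\subseteq\Psi$ write $\rho(F)\subseteq^\rho B$ if there is a finite $K\subseteq\Omega$ with $\rho(F\setminus K)\subseteq B$ (a relation between $F$ and $B$). $\rho$ is $P^+$ if for every $\subseteq$-decreasing sequence $(A_n)_{n\in\omega}$ of sets in $\mathcal{I}_\rho^+$ there is $F\in\mathcal{F}$ with $\rho(F)\subseteq^\rho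 A_n$ for all $n$; $\rho$ is $P^-$ if the same holds for every such sequence additionally satisfying $A_n\setminus A_{n+1}\in\mathcal{I}_\rho$ for all $n$; $\rho$ is $P^{\,|}$ if the same holds for every such sequence additionally satisfying $A_n\setminus A_{n+1}\in\mathcal{I}_\rho^+$ for all $n$. *)

theory Defs
  imports Main "HOL-Library.Countable_Set"
begin

definition pr_setting :: "'a set \<Rightarrow> 'b set \<Rightarrow> 'a set set \<Rightarrow> ('a set \<Rightarrow> 'b set) \<Rightarrow> bool" where
  "pr_setting Omega Psi FF rho \<longleftrightarrow>
     countable Omega \<and> infinite Omega \<and> countable Psi \<and> infinite Psi \<and>
     FF \<noteq> {} \<and> (\<forall>A\<in>FF. A \<subseteq> Omega \<and> infinite A) \<and>
     (\<forall>A\<in>FF. \<forall>K. finite K \<and> K \<subseteq> Omega \<longrightarrow> A - K \<in> FF) \<and>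
     (\<forall>A\<in>FF. rho A \<subseteq> Psi \<and> infinite (rho A))"

definition partition_regular :: "'a set \<Rightarrow> 'b set \<Rightarrow> 'a set set \<Rightarrow> ('a set \<Rightarrow> 'b set) \<Rightarrow> bool" where
  "partition_regular Omega Psi FF rho \<longleftrightarrow>
     pr_setting Omega Psi FF rho \<and>
     (\<forall>E\<in>FF. \<forall>F\<in>FF. E \<subseteq> F \<longrightarrow> rho E \<subseteq> rho F) \<and>
     (\<forall>F\<in>FF. \<forall>A B. A \<subseteq> Psi \<and> B \<subseteq> Psi \<and> rho F = A \<union> B \<longrightarrow>
        (\<exists>E\<in>FF. rho E \<subseteq> A \<or> rho E \<subseteq> B)) \<and>
     (\<forall>F\<in>FF. \<exists>E\<in>FF. E \<subseteq> F \<and>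
        (\<forall>a\<in>rho E. \<exists>K. finite K \<and> K \<subseteq> Omega \<and> a \<notin> rho (E - K)))"

definition I_rho :: "'b set \<Rightarrow> 'a set set \<Rightarrow> ('a set \<Rightarrow> 'b set) \<Rightarrow> 'b set set" where
  "I_rho Psi FF rho = {S. S \<subseteq> Psi \<and> (\<forall>F\<in>FF. \<not> rho F \<subseteq> S)}"

definition I_rho_plus :: "'b set \<Rightarrow> 'a set set \<Rightarrow> ('a set \<Rightarrow> 'b set) \<Rightarrow> 'b set set" where
  "I_rho_plus Psi FF rho = Pow Psi - I_rho Psi FF rho"

definition subseteq_rho :: "'a set \<Rightarrow> ('a set \<Rightarrow> 'b set) \<Rightarrow> 'a set \<Rightarrow> 'b set \<Rightarrow> bool" where
  "subseteq_rho Omega rho F B \<longleftrightarrow> (\<exists>K. finite K \<and> K \<subseteq> Omega \<and> rho (F - K) \<subseteq> B)"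

definition is_P_plus :: "'a set \<Rightarrow> 'b set \<Rightarrow> 'a set set \<Rightarrow> ('a set \<Rightarrow> 'b set) \<Rightarrow> bool" where
  "is_P_plus Omega Psi FF rho \<longleftrightarrow>
     (\<forall>A :: nat \<Rightarrow> 'b set.
        (\<forall>n. A n \<in> I_rho_plus Psi FF rho) \<and> (\<forall>n. A (Suc n) \<subseteq> A n) \<longrightarrow>
        (\<exists>F\<in>FF. \<forall>n. subseteq_rho Omega rho F (A n)))"

definition is_P_minus :: "'a set \<Rightarrow> 'b set \<Rightarrow> 'a set set \<Rightarrow> ('a set \<Rightarrow> 'b set) \<Rightarrow> bool" where
  "is_P_minus Omega Psi FF rho \<longleftrightarrow>
     (\<forall>A :: nat \<Rightarrow> 'b set.
        (\<forall>n. A n \<in> I_rho_plus Psi FF rho) \<and> (\<forall>n. A (Suc n) \<subseteq> A n) \<and>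
        (\<forall>n. A n - A (Suc n) \<in> I_rho Psi FF rho) \<longrightarrow>
        (\<exists>F\<in>FF. \<forall>n. subseteq_rho Omega rho F (A n)))"

definition is_P_bar :: "'a set \<Rightarrow> 'b set \<Rightarrow> 'a set set \<Rightarrow> ('a set \<Rightarrow> 'b set) \<Rightarrow> bool" where
  "is_P_bar Omega Psi FF rho \<longleftrightarrow>
     (\<forall>A :: nat \<Rightarrow> 'b set.
        (\<forall>n. A n \<in> I_rho_plus Psi FF rho) \<and> (\<forall>n. A (Suc n) \<subseteq> A n) \<and>
        (\<forall>n. A n - A (Suc n) \<in> I_rho_plus Psi FF rho) \<longrightarrow>
        (\<exists>F\<in>FF. \<forall>n. subseteq_rho Omega rho F (A n)))"

end

theory Submission
  imports Defs
begin

(* Conversely, given a decreasing sequence A_n of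
   rho-positive sets, either from some index on all gaps A_n - A_(n+1) lie in I_rho, and
   P^- applies to that tail, or infinitely many gaps are rho-positive, and P^| applies to
   the subsequence of A running through those indices, whose gaps contain the original
   ones. A set F with F \<subseteq>^rho A_n along a tail or a subsequence already has it for all n,
   since A is decreasing. *)

lemma I_rho_subset: "T \<in> I_rho Psi FF rho \<Longrightarrow> S \<subseteq> T \<Longrightarrow> S \<in> I_rho Psi FF rho"
  unfolding I_rho_def by blast

lemma I_rho_plus_iff: "S \<in> I_rho_plus Psi FF rho \<longleftrightarrow> S \<subseteq> Psi \<and> S \<notin> I_rho Psi FF rho"
  unfolding I_rho_plus_def by blast

lemma subseteq_rho_mono: "subseteq_rho Omega rho F S \<Longrightarrow> S \<subseteq> T \<Longrightarrow> subseteq_rho Omega rho F T"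
  unfolding subseteq_rho_def by blast

lemma subseteq_rho_antimono_reindex:
  assumes "antimono A" "\<And>n. n \<le> r n" "\<And>n. subseteq_rho Omega rho F (A (r n))"
  shows "subseteq_rho Omega rho F (A n)"
proof -
  have "A (r n) \<subseteq> A n"
    using antimonoD[OF assms(1) assms(2)] by simp
  then show ?thesis
    using assms(3) subseteq_rho_mono by blast
qed

lemma antimono_subseq_gaps:
  fixes A :: "nat \<Rightarrow> 'a set"
  assumes "antimono A" and inf: "infinite {n. P (A n - A (Suc n))}"
    and up: "\<And>S T. P S \<Longrightarrow> S \<subseteq> T \<Longrightarrow> P T"
  obtains r where "strict_mono r" "\<And>k. P (A (r k) - A (r (Suc k)))"
proof
  let ?r = "enumerate {n. P (A n - A (Suc n))}"
  show "strict_mono ?r"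
    using strict_mono_enumerate[OF inf] .
  fix k
  have gap: "P (A (?r k) - A (Suc (?r k)))"
    using enumerate_in_set[OF inf] by blast
  have "A (?r (Suc k)) \<subseteq> A (Suc (?r k))"
    using antimonoD[OF \<open>antimono A\<close>] enumerate_step[OF inf] by (simp add: Suc_le_eq)
  then show "P (A (?r k) - A (?r (Suc k)))"
    by (intro up[OF gap]) blast
qed

lemma P_minus_on_tail:
  assumes "is_P_minus Omega Psi FF rho"
    and pos: "\<And>n. A n \<in> I_rho_plus Psi FF rho" and "antimono A"
    and gaps: "\<And>n. n \<ge> m \<Longrightarrow> A n - A (Suc n) \<in> I_rho Psi FF rho"
  shows "\<exists>F\<in>FF. \<forall>n. subseteq_rho Omega rho F (A n)"
proof -
  let ?B = "\<lambda>n. A (m + n)"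
  have "(\<forall>n. ?B n \<in> I_rho_plus Psi FF rho) \<and> (\<forall>n. ?B (Suc n) \<subseteq> ?B n) \<and>
      (\<forall>n. ?B n - ?B (Suc n) \<in> I_rho Psi FF rho)"
    using pos gaps antimonoD[OF \<open>antimono A\<close>] by simp
  then obtain F where F: "F \<in> FF" "\<And>n. subseteq_rho Omega rho F (?B n)"
    using assms(1)[unfolded is_P_minus_def, rule_format, of ?B] by blast
  have "subseteq_rho Omega rho F (A n)" for n
    by (rule subseteq_rho_antimono_reindex[OF \<open>antimono A\<close>, of "(+) m"]) (use F in auto)
  with F show ?thesis
    by blast
qed

lemma P_bar_on_subseq:
  assumes "is_P_bar Omega Psi FF rho"
    and pos: "\<And>n. A n \<in> I_rho_plus Psi FF rho" and "antimono A"
    and gaps: "infinite {n. A n - A (Suc n) \<notin> I_rho Psi FF rho}"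
  shows "\<exists>F\<in>FF. \<forall>n. subseteq_rho Omega rho F (A n)"
proof -
  obtain r where r: "strict_mono r" "\<And>k. A (r k) - A (r (Suc k)) \<notin> I_rho Psi FF rho"
    using antimono_subseq_gaps[OF \<open>antimono A\<close> gaps] I_rho_subset by blast
  let ?B = "\<lambda>k. A (r k)"
  have "?B (Suc k) \<subseteq> ?B k" for k
    using antimonoD[OF \<open>antimono A\<close>] strict_mono_less_eq[OF r(1)] by simp
  moreover have "?B k - ?B (Suc k) \<in> I_rho_plus Psi FF rho" for k
    using r(2) pos[of "r k"] unfolding I_rho_plus_iff by blast
  ultimately have "(\<forall>k. ?B k \<in> I_rho_plus Psi FF rho) \<and> (\<forall>k. ?B (Suc k) \<subseteq> ?B k) \<and>
      (\<forall>k. ?B k - ?B (Suc k) \<in> I_rho_plus Psi FF rho)"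
    using pos by blast
  then obtain F where F: "F \<in> FF" "\<And>k. subseteq_rho Omega rho F (?B k)"
    using assms(1)[unfolded is_P_bar_def, rule_format, of ?B] by blast
  have "subseteq_rho Omega rho F (A n)" for n
    by (rule subseteq_rho_antimono_reindex[OF \<open>antimono A\<close> strict_mono_imp_increasing[OF r(1)]])
      (use F in auto)
  with F show ?thesis
    by blast
qed

theorem proposition3p1:
  fixes Omega :: "'a set" and Psi :: "'b set" and FF :: "'a set set"
    and rho :: "'a set \<Rightarrow> 'b set"
  assumes "partition_regular Omega Psi FF rho"
  shows "is_P_plus Omega Psi FF rho \<longleftrightarrow>
           (is_P_bar Omega Psi FF rho \<and> is_P_minus Omega Psi FF rho)"
proof
  assume "is_P_plus Omega Psi FF rho"
  then show "is_P_bar Omega Psi FF rho \<and> is_P_minus Omega Psi FF rho"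
    unfolding is_P_plus_def is_P_bar_def is_P_minus_def by blast
next
  assume "is_P_bar Omega Psi FF rho \<and> is_P_minus Omega Psi FF rho"
  then have P_bar: "is_P_bar Omega Psi FF rho" and P_minus: "is_P_minus Omega Psi FF rho"
    by auto
  show "is_P_plus Omega Psi FF rho"
    unfolding is_P_plus_def
  proof (intro allI impI, elim conjE)
    fix A :: "nat \<Rightarrow> 'b set"
    assume pos: "\<forall>n. A n \<in> I_rho_plus Psi FF rho" and "\<forall>n. A (Suc n) \<subseteq> A n"
    then have "antimono A"
      by (simp add: antimono_iff_le_Suc)
    show "\<exists>F\<in>FF. \<forall>n. subseteq_rho Omega rho F (A n)"
    proof (cases "finite {n. A n - A (Suc n) \<notin> I_rho Psi FF rho}")
      case True
      then obtain m where "\<forall>n \<in> {n. A n - A (Suc n) \<notin> I_rho Psi FF rho}. n < m"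
        unfolding finite_nat_set_iff_bounded by blast
      then have "A n - A (Suc n) \<in> I_rho Psi FF rho" if "n \<ge> m" for n
        using that by auto
      then show ?thesis
        by (rule P_minus_on_tail[OF P_minus pos[rule_format] \<open>antimono A\<close>])
    next
      case False
      then show ?thesis
        by (rule P_bar_on_subseq[OF P_bar pos[rule_format] \<open>antimono A\<close>])
    qed
  qed
qed

end
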